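(* Let $K$ and $K'$ be two non-degenerate CMIs, with $\mathrm{can}(\mathrm{pur}(K))=(C,\langle\mathbb I_K,\mathbb I_K,P_i,1\le i\le t\rangle)$ and $\mathrm{can}(\mathrm{pur}(K'))=(C',\langle\mathbb I_{K'},\mathbb I_{K'},P'_j,1\le j\le s\rangle)$. (1) If $R_K^{K'}=(\cdot,\langle\ \rangle)$, then $K$ implies $K'$ if and only if $C\subseteq C'$. (2) If $R_K^{K'}\ne(\cdot,\langle\ \rangle)$, then $K$ implies $K'$ if and only if $K$ implies $R_K^{K'}$.
   Context: Setting: $X_1,\dots,X_n$ jointly distributed discrete random variables with $H(X_i)<\infty$; distribution unspecified. $X_\alpha=(X_i,i\in\alpha)$, $X_\emptyset$ constant. A CMI is $K=(C,\langle Q_1,\dots,Q_k\rangle)$, $k\ge0$, $C\subseteq\{1,\dots,n\}$, $\langle\cdot\rangle$ an unordered multiset of subsets; valid (for a given distribution) if $\sum_iH(X_{Q_i}|X_C)-H(X_{Q_1},\dots,X_{Q_k}|X_C)=0$. Empty members may be deleted. Degenerate = valid for every distribution, written $(\cdot,\langle\ \rangle)$. "$K$ implies $K'$": for every joint distribution, if $K$ is valid then $K'$ is valid. $\mathrm{pur}(K)=(C,\langle Q_i\setminus C:Q_i\setminus C\ne\emptyset\rangle)$. For pure $K$: $\mathbb I_K$ = indices lying in at least two members of the collection if $k\ge2$, else $\emptyset$; $P_1,\dots,P_t$ the nonempty sets among $Q_i\setminus\mathbb I_K$; $\mathrm{can}(K)=(\cdot,\langle\ \rangle)$ if $k\le1$,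 $(C,\langle\mathbb I_K,\mathbb I_K\rangle)$ if $k\ge2,\mathbb I_K\ne\emptyset,t\le1$, $(C,\langle P_1..P_t\rangle)$ if $k\ge2,\mathbb I_K=\emptyset$, $(C,\langle\mathbb I_K,\mathbb I_K,P_1..P_t\rangle)$ if $k\ge2,\mathbb I_K\ne\emptyset,t\ge2$. For general $K$, $\mathbb I_K$ is the repeated-index set of $\mathrm{pur}(K)$; general-form notation omits copies of $\mathbb I_K$ when empty and uses $t=0$ for $(C,\langle\mathbb I_K,\mathbb I_K\rangle)$. $R_K^{K'}$: with $D=\mathbb I_{K'}\setminus\mathbb I_K$ and $T_1,\dots,T_u$ the nonempty sets among $P'_j\setminus\mathbb I_K$: $R_K^{K'}=(\cdot,\langle\ \rangle)$ if $D=\emptyset,u\le1$; $(C'\setminus\mathbb I_K,\langle T_1..T_u\rangle)$ if $D=\emptyset,u\ge2$; $(C'\setminus\mathbb I_K,\langle D,D\rangle)$ if $D\ne\emptyset,u\le1$; $(C'\setminus\mathbb I_K,\langle D,D,T_1..T_u\rangle)$ if $D\ne\emptyset,u\ge2$. *)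

theory Defs
  imports "HOL-Probability.Probability"
begin

text \<open>A joint distribution of the discrete random variables X_1..X_n is modelled as a
  pmf on value-assignments f :: nat => nat (f i is the value of X_i; every discrete
  random variable can be injectively recoded into nat, which does not change entropy).
  X_alpha is the restriction of the assignment to alpha.\<close>

type_synonym dist = "(nat \<Rightarrow> nat) pmf"

definition marg :: "dist \<Rightarrow> nat set \<Rightarrow> (nat \<Rightarrow> nat) pmf" where
  "marg p A = map_pmf (\<lambda>f i. if i \<in> A then f i else 0) p"

definition ent_term :: "'a pmf \<Rightarrow> 'a \<Rightarrow> real" where
  "ent_term q y = - (pmf q y * log 2 (pmf q y))"

definition ent :: "'a pmf \<Rightarrow> real" where
  "ent q = infsum (ent_term q) (set_pmf q)"

definition finite_ent :: "'a pmf \<Rightarrow> bool" where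
  "finite_ent q \<longleftrightarrow> ent_term q summable_on set_pmf q"

definition H :: "dist \<Rightarrow> nat set \<Rightarrow> real" where
  "H p A = ent (marg p A)"

definition condH :: "dist \<Rightarrow> nat set \<Rightarrow> nat set \<Rightarrow> real" where
  "condH p A C = H p (A \<union> C) - H p C"

definition admissible :: "nat \<Rightarrow> dist \<Rightarrow> bool" where
  "admissible n p \<longleftrightarrow> (\<forall>i\<in>{1..n}. finite_ent (marg p {i}))"

type_synonym cmi = "nat set \<times> nat set multiset"

definition wf_cmi :: "nat \<Rightarrow> cmi \<Rightarrow> bool" where
  "wf_cmi n K \<longleftrightarrow> fst K \<subseteq> {1..n} \<and> (\<forall>Q\<in>#snd K. Q \<subseteq> {1..n})"

definition valid :: "dist \<Rightarrow> cmi \<Rightarrow> bool" where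
  "valid p K \<longleftrightarrow>
     (\<Sum>Q\<in>#snd K. condH p Q (fst K)) - condH p (\<Union>(set_mset (snd K))) (fst K) = 0"

definition degenerate :: "nat \<Rightarrow> cmi \<Rightarrow> bool" where
  "degenerate n K \<longleftrightarrow> (\<forall>p. admissible n p \<longrightarrow> valid p K)"

definition implies :: "nat \<Rightarrow> cmi \<Rightarrow> cmi \<Rightarrow> bool" where
  "implies n K K' \<longleftrightarrow> (\<forall>p. admissible n p \<longrightarrow> valid p K \<longrightarrow> valid p K')"

text \<open>Representative of the degenerate CMI (.,< >) produced by the syntactic
  constructions can and R.\<close>
definition deg_cmi :: cmi where
  "deg_cmi = ({}, {#})"

definition pur :: "cmi \<Rightarrow> cmi" where
  "pur K = (fst K, image_mset (\<lambda>Q. Q - fst K) (filter_mset (\<lambda>Q. Q - fst K \<noteq> {}) (snd K)))"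

definition rep_idx :: "nat set multiset \<Rightarrow> nat set" where
  "rep_idx Qs = (if 2 \<le> size Qs then {i. 2 \<le> size (filter_mset (\<lambda>Q. i \<in> Q) Qs)} else {})"

definition II :: "cmi \<Rightarrow> nat set" where
  "II K = rep_idx (snd (pur K))"

definition Ps :: "cmi \<Rightarrow> nat set multiset" where
  "Ps K = filter_mset (\<lambda>P. P \<noteq> {}) (image_mset (\<lambda>Q. Q - II K) (snd (pur K)))"

definition R :: "cmi \<Rightarrow> cmi \<Rightarrow> cmi" where
  "R K K' =
    (let D = II K' - II K;
         Ts = filter_mset (\<lambda>T. T \<noteq> {}) (image_mset (\<lambda>P. P - II K) (Ps K'));
         u = size Ts;
         C'' = fst K' - II K
     in if D = {} \<and> u \<le> 1 then deg_cmi
        else if D = {} then (C'', Ts)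
        else if u \<le> 1 then (C'', {#D, D#})
        else (C'', {#D, D#} + Ts))"

end

theory Submission
  imports Defs
begin

text \<open>For an admissible distribution, A \<mapsto> H(X_A) is monotone and submodular, the latter by
  Gibbs' inequality against the Markov chain X_A -- X_{A \<inter> B} -- X_B. Everything except the
  necessity of C \<subseteq> C' holds for an arbitrary monotone submodular h.
  If K vanishes, every index shared by two members of pur K is determined by X_C; for C \<subseteq> C',
  conditioning on C' is then the same as conditioning on C' - I_K. If moreover D = I_K' - I_K
  is determined by X_{C' - I_K} (which holds when K' vanishes), stripping C', I_K' and I_K from
  the members of K' does not change its CMI and leaves the sets T_j. So K' vanishes iff both the
  D-part and the T-part of R_K^K' vanish, i.e. iff R_K^K' does.
  If C is not contained in C', a fair bit copied to every variable outside C' is determined by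
  X_C, so it satisfies K, while each member of pur K' carries the whole bit, so it violates K'.
  This also applies to R_K^K' in place of K', whose condition lies in C'.\<close>

section \<open>Entropy of discrete distributions\<close>

lemma integrable_measure_pmf_iff_abs_summable:
  fixes f :: "'a \<Rightarrow> real"
  shows "integrable (measure_pmf r) f \<longleftrightarrow>
    Infinite_Set_Sum.abs_summable_on (\<lambda>x. pmf r x * f x) UNIV"
proof -
  have "integrable (measure_pmf r) f \<longleftrightarrow>
      integrable (density (count_space UNIV) (\<lambda>x. ennreal (pmf r x))) f"
    by (simp add: measure_pmf_eq_density)
  also have "\<dots> \<longleftrightarrow> integrable (count_space UNIV) (\<lambda>x. pmf r x *\<^sub>R f x)"
    by (rule integrable_density) auto
  finally show ?thesis by (simp add: abs_summable_on_def)
qed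

lemma has_sum_pmf_integral:
  fixes f :: "'a \<Rightarrow> real"
  assumes "integrable (measure_pmf r) f"
  shows "((\<lambda>x. pmf r x * f x) has_sum (\<integral>x. f x \<partial>r)) (set_pmf r)"
proof -
  have abs: "Infinite_Set_Sum.abs_summable_on (\<lambda>x. pmf r x * f x) UNIV"
    using assms integrable_measure_pmf_iff_abs_summable by blast
  then have "(\<lambda>x. pmf r x * f x) summable_on UNIV"
    using abs_summable_summable abs_summable_equivalent by blast
  moreover have "(\<integral>x. f x \<partial>r) = infsum (\<lambda>x. pmf r x * f x) UNIV"
    using pmf_expectation_eq_infsetsum infsetsum_infsum[OF abs] by (rule trans)
  ultimately have "((\<lambda>x. pmf r x * f x) has_sum (\<integral>x. f x \<partial>r)) UNIV"
    by simp
  then show ?thesis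
    by (rule has_sum_cong_neutral[THEN iffD1, rotated -1]) (auto simp: set_pmf_eq)
qed

lemma integrable_measure_pmf_nonneg:
  fixes f :: "'a \<Rightarrow> real"
  assumes nonneg: "\<And>x. x \<in> set_pmf r \<Longrightarrow> 0 \<le> f x"
    and summable: "(\<lambda>x. pmf r x * f x) summable_on set_pmf r"
  shows "integrable (measure_pmf r) f"
proof -
  have "(\<lambda>x. pmf r x * f x) summable_on UNIV"
    using summable
    by (rule summable_on_cong_neutral[THEN iffD1, rotated -1]) (auto simp: set_pmf_eq)
  moreover have "norm (pmf r x * f x) = pmf r x * f x" for x
    using nonneg[of x] by (cases "x \<in> set_pmf r") (auto simp: set_pmf_eq)
  ultimately have "(\<lambda>x. norm (pmf r x * f x)) summable_on UNIV"
    by simp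
  then show ?thesis
    using abs_summable_equivalent integrable_measure_pmf_iff_abs_summable by blast
qed

lemma has_sum_pmf: "(pmf r has_sum 1) (set_pmf r)"
  using has_sum_pmf_integral[of r "\<lambda>_. 1"] by simp

lemma ent_term_nonneg: "0 \<le> ent_term q y"
proof (cases "pmf q y = 0")
  case False
  then have "log 2 (pmf q y) \<le> 0"
    by (simp add: pmf_le_1 zero_less_iff_neq_zero)
  then show ?thesis
    by (simp add: ent_term_def mult_nonneg_nonpos)
qed (simp add: ent_term_def)

lemma finite_ent_iff_integrable:
  "finite_ent q \<longleftrightarrow> integrable (measure_pmf q) (\<lambda>y. - log 2 (pmf q y))"
proof
  assume "integrable (measure_pmf q) (\<lambda>y. - log 2 (pmf q y))"
  from has_sum_pmf_integral[OF this] show "finite_ent q"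
    unfolding finite_ent_def ent_term_def by (simp add: has_sum_imp_summable)
next
  assume "finite_ent q"
  then show "integrable (measure_pmf q) (\<lambda>y. - log 2 (pmf q y))"
    unfolding finite_ent_def ent_term_def
    by (intro integrable_measure_pmf_nonneg) (auto simp: pmf_le_1 set_pmf_iff)
qed

lemma ent_eq_integral:
  assumes "finite_ent q"
  shows "ent q = (\<integral>y. - log 2 (pmf q y) \<partial>q)"
  unfolding ent_def ent_term_def
  using has_sum_pmf_integral[OF assms[unfolded finite_ent_iff_integrable]]
  by (intro infsumI) simp

lemma finite_ent_map_pmf_iff:
  "finite_ent (map_pmf a r) \<longleftrightarrow>
    integrable (measure_pmf r) (\<lambda>x. - log 2 (pmf (map_pmf a r) (a x)))"
  by (simp add: finite_ent_iff_integrable)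

lemma ent_map_pmf_eq_integral:
  assumes "finite_ent (map_pmf a r)"
  shows "ent (map_pmf a r) = (\<integral>x. - log 2 (pmf (map_pmf a r) (a x)) \<partial>r)"
  using assms by (simp add: ent_eq_integral finite_ent_iff_integrable)

lemma finite_ent_finite_support: "finite (set_pmf q) \<Longrightarrow> finite_ent q"
  unfolding finite_ent_def by (rule summable_on_finite)

lemma ent_return_pmf: "ent (return_pmf x) = 0"
  unfolding ent_def ent_term_def by simp

lemma ent_pmf_of_set_doubleton:
  assumes "u \<noteq> v"
  shows "ent (pmf_of_set {u, v}) = 1"
  using assms by (simp add: ent_def ent_term_def set_pmf_of_set pmf_of_set log_divide)

lemma gibbs_pointwise:
  fixes p q :: real
  assumes "0 < p" "0 < q"
  shows "p * - log 2 p \<le> p * - log 2 q + (q - p) / ln 2"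
proof -
  have "p * ln (q / p) \<le> p * (q / p - 1)"
    using assms by (intro mult_left_mono ln_le_minus_one) auto
  also have "\<dots> = q - p"
    using assms by (simp add: field_simps)
  finally have "p * (ln q - ln p) \<le> q - p"
    using assms by (simp add: ln_div)
  then have "p * (ln q - ln p) / ln 2 \<le> (q - p) / ln 2"
    by (simp add: divide_right_mono)
  then show ?thesis
    by (simp add: log_def field_simps)
qed

lemma gibbs_inequality:
  fixes r :: "'a pmf" and q :: "'a \<Rightarrow> real"
  assumes pos: "\<And>x. x \<in> set_pmf r \<Longrightarrow> 0 < q x"
    and subprob: "\<And>F. finite F \<Longrightarrow> F \<subseteq> set_pmf r \<Longrightarrow> sum q F \<le> 1"
    and int: "integrable (measure_pmf r) (\<lambda>x. - log 2 (q x))"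
  shows "finite_ent r" and "ent r \<le> (\<integral>x. - log 2 (q x) \<partial>r)"
proof -
  define S where "S = (\<integral>x. - log 2 (q x) \<partial>r)"
  define Q where "Q = infsum q (set_pmf r)"
  have hs: "((\<lambda>x. pmf r x * - log 2 (q x)) has_sum S) (set_pmf r)"
    unfolding S_def by (rule has_sum_pmf_integral[OF int])
  have "q summable_on set_pmf r"
    using pos subprob
    by (intro nonneg_bdd_above_summable_on) (auto simp: bdd_above_def less_imp_le)
  then have hq: "((\<lambda>x. q x / ln 2) has_sum (Q / ln 2)) (set_pmf r)"
    unfolding Q_def by (intro has_sum_divide_const) simp
  have Q_le: "Q \<le> 1"
    unfolding Q_def using \<open>q summable_on set_pmf r\<close> subprob by (rule infsum_le_finite_sums)
  have hp: "((\<lambda>x. - (pmf r x / ln 2)) has_sum - (1 / ln 2)) (set_pmf r)"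
    by (intro has_sum_uminusI has_sum_divide_const has_sum_pmf)
  have pt: "ent_term r x \<le> pmf r x * - log 2 (q x) + q x / ln 2 + - (pmf r x / ln 2)"
    if "x \<in> set_pmf r" for x
    using gibbs_pointwise[of "pmf r x" "q x"] pos[OF that] that
    by (simp add: ent_term_def pmf_positive diff_divide_distrib)
  have "ent_term r summable_on set_pmf r"
  proof (rule summable_on_comparison_test)
    show "(\<lambda>x. pmf r x * - log 2 (q x) + q x / ln 2) summable_on set_pmf r"
      using has_sum_add[OF hs hq] by (rule has_sum_imp_summable)
    show "ent_term r x \<le> pmf r x * - log 2 (q x) + q x / ln 2" if "x \<in> set_pmf r" for x
    proof -
      have "0 \<le> pmf r x / ln 2"
        by simp
      then show ?thesis
        using pt[OF that] by linarith
    qed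
  qed (rule ent_term_nonneg)
  then show "finite_ent r"
    unfolding finite_ent_def .
  then have "(ent_term r has_sum ent r) (set_pmf r)"
    unfolding finite_ent_def ent_def by simp
  then have "ent r \<le> S + Q / ln 2 + - (1 / ln 2)"
    using has_sum_add[OF has_sum_add[OF hs hq] hp] pt by (rule has_sum_mono)
  also have "\<dots> \<le> S"
    using Q_le by (simp add: divide_right_mono)
  finally show "ent r \<le> (\<integral>x. - log 2 (q x) \<partial>r)"
    unfolding S_def .
qed

lemma pmf_le_pmf_map: "pmf r x \<le> pmf (map_pmf a r) (a x)"
proof -
  have "pmf r x = measure (measure_pmf r) {x}"
    by (simp add: measure_pmf_single)
  also have "\<dots> \<le> measure (measure_pmf r) (a -` {a x})"
    by (intro measure_pmf.finite_measure_mono) auto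
  also have "\<dots> = pmf (map_pmf a r) (a x)"
    by (simp add: pmf_map)
  finally show ?thesis .
qed

lemma sum_pmf_le_pmf_map:
  assumes "finite Y" "Y \<subseteq> a -` {w}"
  shows "sum (pmf r) Y \<le> pmf (map_pmf a r) w"
proof -
  have "sum (pmf r) Y = measure (measure_pmf r) Y"
    using assms by (simp add: measure_measure_pmf_finite)
  also have "\<dots> \<le> measure (measure_pmf r) (a -` {w})"
    using assms by (intro measure_pmf.finite_measure_mono) auto
  also have "\<dots> = pmf (map_pmf a r) w"
    by (simp add: pmf_map)
  finally show ?thesis .
qed

lemma finite_ent_map_pmf:
  assumes "finite_ent r"
  shows "finite_ent (map_pmf a r)" and "ent (map_pmf a r) \<le> ent r"
proof -
  have int_r: "integrable (measure_pmf r) (\<lambda>x. - log 2 (pmf r x))"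
    using assms by (simp add: finite_ent_iff_integrable)
  have le: "- log 2 (pmf (map_pmf a r) (a x)) \<le> - log 2 (pmf r x)" if "x \<in> set_pmf r" for x
    using pmf_le_pmf_map[of r x a] that by (simp add: pmf_positive)
  have nonneg: "0 \<le> - log 2 (pmf (map_pmf a r) (a x))" if "x \<in> set_pmf r" for x
    using that by (simp add: pmf_positive pmf_le_1)
  have int_a: "integrable (measure_pmf r) (\<lambda>x. - log 2 (pmf (map_pmf a r) (a x)))"
  proof (rule Bochner_Integration.integrable_bound[OF int_r])
    show "AE x in measure_pmf r.
        norm (- log 2 (pmf (map_pmf a r) (a x))) \<le> norm (- log 2 (pmf r x))"
      unfolding AE_measure_pmf_iff
      using le nonneg by (force simp: abs_if)
  qed simp
  then show "finite_ent (map_pmf a r)"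
    by (simp add: finite_ent_map_pmf_iff)
  have "ent (map_pmf a r) = (\<integral>x. - log 2 (pmf (map_pmf a r) (a x)) \<partial>r)"
    using int_a by (simp add: ent_map_pmf_eq_integral finite_ent_map_pmf_iff)
  also have "\<dots> \<le> (\<integral>x. - log 2 (pmf r x) \<partial>r)"
    using int_a int_r le by (intro integral_mono_AE) (auto simp: AE_measure_pmf_iff)
  also have "\<dots> = ent r"
    using assms by (simp add: ent_eq_integral)
  finally show "ent (map_pmf a r) \<le> ent r" .
qed

text \<open>The weights of the Markov chain a -- c -- b through the common part c of a and b.\<close>
lemma sum_markov_weights_le_1:
  fixes r :: "'x pmf" and a :: "'x \<Rightarrow> 'y" and b :: "'x \<Rightarrow> 'z"
    and ca :: "'y \<Rightarrow> 'w" and cb :: "'z \<Rightarrow> 'w"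
  defines "c \<equiv> \<lambda>x. ca (a x)"
  assumes common: "\<And>x. x \<in> set_pmf r \<Longrightarrow> ca (a x) = cb (b x)"
    and inj: "inj_on (\<lambda>x. (a x, b x)) (set_pmf r)"
    and F: "finite F" "F \<subseteq> set_pmf r"
  shows "(\<Sum>x\<in>F. pmf (map_pmf a r) (a x) * pmf (map_pmf b r) (b x) / pmf (map_pmf c r) (c x)) \<le> 1"
proof -
  let ?ra = "map_pmf a r" and ?rb = "map_pmf b r" and ?rc = "map_pmf c r"
  have rca: "map_pmf ca ?ra = ?rc"
    by (simp add: c_def map_pmf_comp)
  have rcb: "map_pmf cb ?rb = ?rc"
    unfolding c_def map_pmf_comp by (rule map_pmf_cong) (auto simp: common)
  have fiber: "(\<Sum>x\<in>F \<inter> c -` {w}. pmf ?ra (a x) * pmf ?rb (b x) / pmf ?rc w) \<le> pmf ?rc w"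
    if "w \<in> c ` F" for w
  proof -
    define Fw where "Fw = F \<inter> c -` {w}"
    have "finite Fw"
      using F by (simp add: Fw_def)
    have "w \<in> set_pmf ?rc"
      using that F by auto
    then have pos: "0 < pmf ?rc w"
      by (simp add: pmf_positive)
    have "(\<Sum>x\<in>Fw. pmf ?ra (a x) * pmf ?rb (b x))
        = (\<Sum>(y, z)\<in>(\<lambda>x. (a x, b x)) ` Fw. pmf ?ra y * pmf ?rb z)"
      using inj F by (subst sum.reindex) (auto simp: Fw_def intro: inj_on_subset)
    also have "\<dots> \<le> (\<Sum>(y, z)\<in>a ` Fw \<times> b ` Fw. pmf ?ra y * pmf ?rb z)"
      using \<open>finite Fw\<close> by (intro sum_mono2) auto
    also have "\<dots> = (\<Sum>y\<in>a ` Fw. pmf ?ra y) * (\<Sum>z\<in>b ` Fw. pmf ?rb z)"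
      by (simp add: sum_product sum.cartesian_product)
    also have "\<dots> \<le> pmf ?rc w * pmf ?rc w"
    proof (intro mult_mono sum_nonneg)
      show "(\<Sum>y\<in>a ` Fw. pmf ?ra y) \<le> pmf ?rc w"
        unfolding rca[symmetric] using \<open>finite Fw\<close>
        by (intro sum_pmf_le_pmf_map) (auto simp: Fw_def c_def)
      show "(\<Sum>z\<in>b ` Fw. pmf ?rb z) \<le> pmf ?rc w"
        unfolding rcb[symmetric] using \<open>finite Fw\<close> F
        by (intro sum_pmf_le_pmf_map) (auto simp: Fw_def c_def common subset_iff)
    qed auto
    finally show ?thesis
      using pos by (simp add: Fw_def sum_divide_distrib[symmetric] divide_le_eq)
  qed
  have "(\<Sum>x\<in>F. pmf ?ra (a x) * pmf ?rb (b x) / pmf ?rc (c x))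
      = (\<Sum>w\<in>c ` F. \<Sum>x\<in>F \<inter> c -` {w}. pmf ?ra (a x) * pmf ?rb (b x) / pmf ?rc w)"
    using F by (subst sum.image_gen[of F]) (auto intro!: sum.cong)
  also have "\<dots> \<le> (\<Sum>w\<in>c ` F. pmf ?rc w)"
    by (intro sum_mono fiber)
  also have "\<dots> = measure (measure_pmf ?rc) (c ` F)"
    using F by (intro measure_measure_pmf_finite[symmetric]) simp
  also have "\<dots> \<le> 1"
    by (rule measure_pmf.prob_le_1)
  finally show ?thesis .
qed

lemma ent_submodular_pmf:
  fixes r :: "'x pmf" and a :: "'x \<Rightarrow> 'y" and b :: "'x \<Rightarrow> 'z"
    and ca :: "'y \<Rightarrow> 'w" and cb :: "'z \<Rightarrow> 'w"
  defines "c \<equiv> \<lambda>x. ca (a x)"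
  assumes common: "\<And>x. x \<in> set_pmf r \<Longrightarrow> ca (a x) = cb (b x)"
    and inj: "inj_on (\<lambda>x. (a x, b x)) (set_pmf r)"
    and fin_a: "finite_ent (map_pmf a r)" and fin_b: "finite_ent (map_pmf b r)"
    and fin_c: "finite_ent (map_pmf c r)"
  shows "finite_ent r"
    and "ent r + ent (map_pmf c r) \<le> ent (map_pmf a r) + ent (map_pmf b r)"
proof -
  define La where "La = (\<lambda>x. - log 2 (pmf (map_pmf a r) (a x)))"
  define Lb where "Lb = (\<lambda>x. - log 2 (pmf (map_pmf b r) (b x)))"
  define Lc where "Lc = (\<lambda>x. - log 2 (pmf (map_pmf c r) (c x)))"
  define q where
    "q = (\<lambda>x. pmf (map_pmf a r) (a x) * pmf (map_pmf b r) (b x) / pmf (map_pmf c r) (c x))"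
  have int: "integrable (measure_pmf r) La" "integrable (measure_pmf r) Lb"
    "integrable (measure_pmf r) Lc"
    using fin_a fin_b fin_c unfolding La_def Lb_def Lc_def finite_ent_map_pmf_iff .
  have pos: "0 < q x" if "x \<in> set_pmf r" for x
    using that by (simp add: q_def pmf_positive)
  have log_q: "- log 2 (q x) = La x + Lb x - Lc x" if "x \<in> set_pmf r" for x
  proof -
    have "0 < pmf (map_pmf a r) (a x)" "0 < pmf (map_pmf b r) (b x)" "0 < pmf (map_pmf c r) (c x)"
      using that by (simp_all add: pmf_positive)
    then show ?thesis
      by (simp add: q_def La_def Lb_def Lc_def log_mult log_divide)
  qed
  have int_q: "integrable (measure_pmf r) (\<lambda>x. - log 2 (q x))"
    using int by (subst integrable_cong_AE[where g="\<lambda>x. La x + Lb x - Lc x"])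
      (auto simp: AE_measure_pmf_iff log_q)
  have subprob: "sum q F \<le> 1" if "finite F" "F \<subseteq> set_pmf r" for F
    using sum_markov_weights_le_1[where ca=ca and cb=cb, OF common inj that]
    by (simp add: q_def c_def)
  note gibbs = gibbs_inequality[OF pos subprob int_q]
  show "finite_ent r"
    by (rule gibbs(1))
  have "ent r \<le> (\<integral>x. - log 2 (q x) \<partial>r)"
    by (rule gibbs(2))
  also have "\<dots> = (\<integral>x. La x + Lb x - Lc x \<partial>r)"
    by (rule integral_cong_AE) (auto simp: AE_measure_pmf_iff log_q)
  also have "\<dots> = ent (map_pmf a r) + ent (map_pmf b r) - ent (map_pmf c r)"
    using int fin_a fin_b fin_c by (simp add: La_def Lb_def Lc_def ent_map_pmf_eq_integral)
  finally show "ent r + ent (map_pmf c r) \<le> ent (map_pmf a r) + ent (map_pmf b r)"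
    by simp
qed

section \<open>Entropies of marginals\<close>

definition restrict0 :: "nat set \<Rightarrow> (nat \<Rightarrow> nat) \<Rightarrow> nat \<Rightarrow> nat" where
  "restrict0 A f = (\<lambda>i. if i \<in> A then f i else 0)"

lemma marg_eq_map_restrict0: "marg p A = map_pmf (restrict0 A) p"
  by (simp add: marg_def restrict0_def[abs_def])

lemma restrict0_restrict0: "restrict0 A (restrict0 B f) = restrict0 (A \<inter> B) f"
  by (auto simp: restrict0_def)

lemma map_restrict0_marg: "map_pmf (restrict0 A) (marg p B) = marg p (A \<inter> B)"
  by (simp add: marg_eq_map_restrict0 map_pmf_comp restrict0_restrict0)

lemma restrict0_marg_support: "x \<in> set_pmf (marg p A) \<Longrightarrow> restrict0 A x = x"
  by (auto simp: marg_eq_map_restrict0 restrict0_restrict0)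

lemma restrict0_union_eqI:
  assumes "restrict0 A x = restrict0 A y" "restrict0 B x = restrict0 B y"
  shows "restrict0 (A \<union> B) x = restrict0 (A \<union> B) y"
proof
  fix i
  show "restrict0 (A \<union> B) x i = restrict0 (A \<union> B) y i"
    using fun_cong[OF assms(1), of i] fun_cong[OF assms(2), of i] by (auto simp: restrict0_def)
qed

lemma finite_ent_marg_empty: "finite_ent (marg p {})"
  by (simp add: marg_def map_pmf_const finite_ent_finite_support)

lemma H_mono_finite_ent:
  assumes "finite_ent (marg p B)" "A \<subseteq> B"
  shows "finite_ent (marg p A)" and "H p A \<le> H p B"
proof -
  have "map_pmf (restrict0 A) (marg p B) = marg p A"
    using assms(2) by (simp add: map_restrict0_marg Int_absorb2)
  then show "finite_ent (marg p A)" "H p A \<le> H p B"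
    using finite_ent_map_pmf[OF assms(1), of "restrict0 A"] by (simp_all add: H_def)
qed

lemma H_submodular_finite_ent:
  assumes fin_A: "finite_ent (marg p A)" and fin_B: "finite_ent (marg p B)"
  shows "finite_ent (marg p (A \<union> B))" and "H p (A \<union> B) + H p (A \<inter> B) \<le> H p A + H p B"
proof -
  let ?r = "marg p (A \<union> B)"
  have common: "restrict0 (A \<inter> B) (restrict0 A x) = restrict0 (A \<inter> B) (restrict0 B x)" for x
    by (auto simp: restrict0_def)
  have inj: "inj_on (\<lambda>x. (restrict0 A x, restrict0 B x)) (set_pmf ?r)"
  proof (rule inj_onI)
    fix x y assume "x \<in> set_pmf ?r" "y \<in> set_pmf ?r"
      and "(restrict0 A x, restrict0 B x) = (restrict0 A y, restrict0 B y)"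
    then show "x = y"
      using restrict0_union_eqI[of A x y B] restrict0_marg_support[of x p "A \<union> B"]
        restrict0_marg_support[of y p "A \<union> B"]
      by simp
  qed
  have marg_A: "map_pmf (restrict0 A) ?r = marg p A"
    and marg_B: "map_pmf (restrict0 B) ?r = marg p B"
    by (simp_all add: map_restrict0_marg Int_absorb2)
  have marg_AB: "map_pmf (\<lambda>x. restrict0 (A \<inter> B) (restrict0 A x)) ?r = marg p (A \<inter> B)"
    by (simp add: restrict0_restrict0 map_restrict0_marg Int_assoc Int_absorb2 Int_commute)
  have "finite_ent (marg p (A \<inter> B))"
    using fin_A by (rule H_mono_finite_ent) simp
  note submod = ent_submodular_pmf[where r="?r" and ca="restrict0 (A \<inter> B)"
      and cb="restrict0 (A \<inter> B)", OF common inj, unfolded marg_A marg_B marg_AB,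
      OF fin_A fin_B this]
  show "finite_ent (marg p (A \<union> B))"
    by (rule submod(1))
  show "H p (A \<union> B) + H p (A \<inter> B) \<le> H p A + H p B"
    using submod(2) by (simp add: H_def)
qed

lemma finite_ent_marg_admissible:
  assumes adm: "admissible n p" and A: "A \<subseteq> {1..n}"
  shows "finite_ent (marg p A)"
proof -
  have "finite A"
    using A finite_subset by blast
  then show ?thesis
    using A
  proof (induction A rule: finite_induct)
    case empty
    show ?case
      by (rule finite_ent_marg_empty)
  next
    case (insert i A)
    have "finite_ent (marg p {i})"
      using adm insert.prems by (simp add: admissible_def)
    with insert show ?case
      using H_submodular_finite_ent(1)[of p "{i}" A] by simp
  qed
qed

section \<open>Monotone submodular set functions\<close>

locale monotone_submodular =
  fixes h :: "'a set \<Rightarrow> real" and U :: "'a set"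
  assumes mono: "B \<subseteq> U \<Longrightarrow> A \<subseteq> B \<Longrightarrow> h A \<le> h B"
    and submodular: "A \<subseteq> U \<Longrightarrow> B \<subseteq> U \<Longrightarrow> h (A \<union> B) + h (A \<inter> B) \<le> h A + h B"

lemma monotone_submodular_H:
  assumes "admissible n p"
  shows "monotone_submodular (H p) {1..n}"
proof
  fix A B assume "B \<subseteq> {1..n}" "A \<subseteq> B"
  then show "H p A \<le> H p B"
    using assms by (intro H_mono_finite_ent(2) finite_ent_marg_admissible)
next
  fix A B assume "A \<subseteq> {1..n}" "B \<subseteq> {1..n}"
  then show "H p (A \<union> B) + H p (A \<inter> B) \<le> H p A + H p B"
    using assms by (intro H_submodular_finite_ent(2) finite_ent_marg_admissible)
qed

definition hcond :: "('a set \<Rightarrow> real) \<Rightarrow> 'a set \<Rightarrow> 'a set \<Rightarrow> real" where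
  "hcond h X C = h (X \<union> C) - h C"

definition cmi_gap :: "('a set \<Rightarrow> real) \<Rightarrow> 'a set \<Rightarrow> 'a set multiset \<Rightarrow> real" where
  "cmi_gap h C M = (\<Sum>Q\<in>#M. hcond h Q C) - hcond h (\<Union>(set_mset M)) C"

lemma valid_iff_cmi_gap: "valid p K \<longleftrightarrow> cmi_gap (H p) (fst K) (snd K) = 0"
  unfolding valid_def cmi_gap_def hcond_def condH_def ..

lemma hcond_empty [simp]: "hcond h {} C = 0"
  by (simp add: hcond_def)

lemma hcond_diff_cond: "hcond h (X - C) C = hcond h X C"
  by (simp add: hcond_def)

lemma cmi_gap_empty [simp]: "cmi_gap h C {#} = 0"
  by (simp add: cmi_gap_def)

lemma cmi_gap_size_le_1: "size M \<le> 1 \<Longrightarrow> cmi_gap h C M = 0"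
  by (cases M) (auto simp: cmi_gap_def)

lemma cmi_gap_image_diff:
  assumes "\<And>Q. Q \<in># M \<Longrightarrow> hcond h (Q - J) C = hcond h Q C"
    and "hcond h (\<Union>(set_mset M) - J) C = hcond h (\<Union>(set_mset M)) C"
  shows "cmi_gap h C (image_mset (\<lambda>Q. Q - J) M) = cmi_gap h C M"
proof -
  have "(\<Sum>Q\<in>#image_mset (\<lambda>Q. Q - J) M. hcond h Q C) = (\<Sum>Q\<in>#M. hcond h Q C)"
    using assms(1) by (simp add: multiset.map_comp comp_def cong: image_mset_cong)
  moreover have "\<Union>(set_mset (image_mset (\<lambda>Q. Q - J) M)) = \<Union>(set_mset M) - J"
    by auto
  ultimately show ?thesis
    using assms(2) by (simp add: cmi_gap_def)
qed

lemma cmi_gap_filter_nonempty: "cmi_gap h C (filter_mset (\<lambda>Q. Q \<noteq> {}) M) = cmi_gap h C M"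
proof -
  have "(\<Sum>Q\<in>#filter_mset (\<lambda>Q. Q \<noteq> {}) M. hcond h Q C) = (\<Sum>Q\<in>#M. hcond h Q C)"
    by (induction M) auto
  moreover have "\<Union>(set_mset (filter_mset (\<lambda>Q. Q \<noteq> {}) M)) = \<Union>(set_mset M)"
    by auto
  ultimately show ?thesis
    by (simp add: cmi_gap_def)
qed

lemma cmi_gap_cong_cond:
  assumes "\<And>X. X \<subseteq> U \<Longrightarrow> hcond h X C = hcond h X C'" "\<forall>Q\<in>#M. Q \<subseteq> U"
  shows "cmi_gap h C M = cmi_gap h C' M"
proof -
  have "(\<Sum>Q\<in>#M. hcond h Q C) = (\<Sum>Q\<in>#M. hcond h Q C')"
    using assms by (intro arg_cong[where f=sum_mset] image_mset_cong) auto
  moreover have "hcond h (\<Union>(set_mset M)) C = hcond h (\<Union>(set_mset M)) C'"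
    using assms by (intro assms(1)) auto
  ultimately show ?thesis
    by (simp add: cmi_gap_def)
qed

lemma two_members_filter_mset:
  assumes "2 \<le> size (filter_mset P M)"
  obtains A B where "{#A, B#} \<subseteq># M" "P A" "P B"
proof (cases "filter_mset P M")
  case empty
  with assms show ?thesis
    by (simp only: size_empty) simp
next
  case (add A N)
  with assms obtain B N' where N: "N = add_mset B N'"
    by (cases N) auto
  have "{#A, B#} \<subseteq># filter_mset P M"
    using add N by simp
  then have "{#A, B#} \<subseteq># M"
    using multiset_filter_subset subset_mset.order_trans by blast
  moreover have "A \<in># filter_mset P M" "B \<in># filter_mset P M"
    using add N by auto
  ultimately show ?thesis
    using that by simp
qed

lemma shared_indices_subset_Union:
  "{i. 2 \<le> size (filter_mset (\<lambda>Q. i \<in> Q) M)} \<subseteq> \<Union>(set_mset M)"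
proof
  fix i assume "i \<in> {i. 2 \<le> size (filter_mset (\<lambda>Q. i \<in> Q) M)}"
  then obtain A B where "{#A, B#} \<subseteq># M" "i \<in> A"
    by (auto elim: two_members_filter_mset)
  then show "i \<in> \<Union>(set_mset M)"
    by (auto dest: mset_subset_eqD)
qed

context monotone_submodular
begin

lemma hcond_mono: "C \<subseteq> U \<Longrightarrow> Y \<subseteq> U \<Longrightarrow> X \<subseteq> Y \<Longrightarrow> hcond h X C \<le> hcond h Y C"
  using mono[of "Y \<union> C" "X \<union> C"] by (auto simp: hcond_def)

lemma hcond_nonneg: "C \<subseteq> U \<Longrightarrow> X \<subseteq> U \<Longrightarrow> 0 \<le> hcond h X C"
  using hcond_mono[of C X "{}"] by simp

lemma hcond_submodular:
  assumes "C \<subseteq> U" "X \<subseteq> U" "Y \<subseteq> U"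
  shows "hcond h (X \<union> Y) C + hcond h (X \<inter> Y) C \<le> hcond h X C + hcond h Y C"
proof -
  have "(X \<union> C) \<union> (Y \<union> C) = (X \<union> Y) \<union> C" "(X \<union> C) \<inter> (Y \<union> C) = (X \<inter> Y) \<union> C"
    by auto
  then show ?thesis
    using submodular[of "X \<union> C" "Y \<union> C"] assms by (simp add: hcond_def)
qed

lemma hcond_subadditive:
  assumes "C \<subseteq> U" "X \<subseteq> U" "Y \<subseteq> U"
  shows "hcond h (X \<union> Y) C \<le> hcond h X C + hcond h Y C"
proof -
  have "X \<inter> Y \<subseteq> U"
    using assms by auto
  from hcond_nonneg[OF assms(1) this] show ?thesis
    using hcond_submodular[OF assms] by linarith
qed

lemma hcond_conditioning_reduces:
  assumes "C \<subseteq> C'" "C' \<subseteq> U" "X \<subseteq> U"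
  shows "hcond h X C' \<le> hcond h X C"
proof -
  have "h ((X \<union> C) \<union> C') + h ((X \<union> C) \<inter> C') \<le> h (X \<union> C) + h C'"
    using assms by (intro submodular) auto
  moreover have "h C \<le> h ((X \<union> C) \<inter> C')"
    using assms by (intro mono) auto
  moreover have "(X \<union> C) \<union> C' = X \<union> C'"
    using assms by auto
  ultimately show ?thesis
    by (simp add: hcond_def)
qed

lemma hcond_union_null:
  assumes "C \<subseteq> U" "X \<subseteq> U" "J \<subseteq> U" "hcond h J C = 0"
  shows "hcond h (X \<union> J) C = hcond h X C"
  using hcond_subadditive[of C X J] hcond_mono[of C "X \<union> J" X] assms by auto

lemma hcond_diff_null:
  assumes "C \<subseteq> U" "X \<subseteq> U" "J \<subseteq> U" "hcond h J C = 0"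
  shows "hcond h (X - J) C = hcond h X C"
proof -
  have "X - J \<subseteq> U"
    using assms by auto
  then show ?thesis
    using hcond_union_null[of C "X - J" J] hcond_union_null[of C X J] assms
    by (simp add: Un_Diff_cancel2)
qed

lemma hcond_null_subset:
  assumes "C \<subseteq> U" "Y \<subseteq> U" "X \<subseteq> Y" "hcond h Y C = 0"
  shows "hcond h X C = 0"
  using hcond_mono[of C Y X] hcond_nonneg[of C X] assms by auto

lemma hcond_null_union:
  assumes "C \<subseteq> U" "X \<subseteq> U" "Y \<subseteq> U" "hcond h X C = 0" "hcond h Y C = 0"
  shows "hcond h (X \<union> Y) C = 0"
  using hcond_union_null[of C X Y] assms by simp

lemma hcond_null_finite:
  assumes "C \<subseteq> U" "finite J" "J \<subseteq> U" "\<And>i. i \<in> J \<Longrightarrow> hcond h {i} C = 0"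
  shows "hcond h J C = 0"
  using assms(2-4)
proof (induction J rule: finite_induct)
  case (insert i J)
  then show ?case
    using hcond_null_union[of C "{i}" J] assms(1) by simp
qed simp

lemma cmi_gap_add:
  assumes "C \<subseteq> U" "\<forall>Q\<in>#M. Q \<subseteq> U" "\<forall>Q\<in>#N. Q \<subseteq> U"
  shows "cmi_gap h C M + cmi_gap h C N \<le> cmi_gap h C (M + N)"
proof -
  have "\<Union>(set_mset M) \<subseteq> U" "\<Union>(set_mset N) \<subseteq> U"
    using assms by auto
  then have "hcond h (\<Union>(set_mset (M + N))) C
      \<le> hcond h (\<Union>(set_mset M)) C + hcond h (\<Union>(set_mset N)) C"
    using hcond_subadditive[OF assms(1)] by (simp add: set_mset_union)
  then show ?thesis
    by (simp add: cmi_gap_def)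
qed

lemma cmi_gap_nonneg:
  assumes "C \<subseteq> U" "\<forall>Q\<in>#M. Q \<subseteq> U"
  shows "0 \<le> cmi_gap h C M"
  using assms(2)
proof (induction M)
  case (add Q M)
  then show ?case
    using cmi_gap_add[OF assms(1), of "{#Q#}" M] by (simp add: cmi_gap_size_le_1)
qed simp

lemma cmi_gap_subset_mset:
  assumes "C \<subseteq> U" "\<forall>Q\<in>#M. Q \<subseteq> U" "N \<subseteq># M"
  shows "cmi_gap h C N \<le> cmi_gap h C M"
proof -
  have "\<forall>Q\<in>#N. Q \<subseteq> U" "\<forall>Q\<in>#M - N. Q \<subseteq> U"
    using assms by (auto dest: mset_subset_eqD in_diffD)
  then have "cmi_gap h C N \<le> cmi_gap h C (N + (M - N))"
    using cmi_gap_add[OF assms(1), of N "M - N"] cmi_gap_nonneg[OF assms(1), of "M - N"]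
    by linarith
  also have "N + (M - N) = M"
    using assms(3) by (rule subset_mset.add_diff_inverse)
  finally show ?thesis .
qed

lemma cmi_gap_doubled:
  assumes "C \<subseteq> U" "D \<subseteq> U" "\<forall>Q\<in>#M. Q \<subseteq> U"
  shows "cmi_gap h C ({#D, D#} + M) = 0 \<longleftrightarrow> hcond h D C = 0 \<and> cmi_gap h C M = 0"
proof
  assume gap: "cmi_gap h C ({#D, D#} + M) = 0"
  have "cmi_gap h C {#D, D#} = hcond h D C"
    by (simp add: cmi_gap_def)
  then show "hcond h D C = 0 \<and> cmi_gap h C M = 0"
    using cmi_gap_add[of C "{#D, D#}" M] hcond_nonneg[of C D] cmi_gap_nonneg[of C M] gap assms
    by simp
next
  assume null: "hcond h D C = 0 \<and> cmi_gap h C M = 0"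
  have "\<Union>(set_mset ({#D, D#} + M)) = \<Union>(set_mset M) \<union> D"
    by auto
  moreover have "\<Union>(set_mset M) \<subseteq> U"
    using assms by auto
  ultimately have "hcond h (\<Union>(set_mset ({#D, D#} + M))) C = hcond h (\<Union>(set_mset M)) C"
    using hcond_union_null[of C "\<Union>(set_mset M)" D] assms null by simp
  then show "cmi_gap h C ({#D, D#} + M) = 0"
    using null by (simp add: cmi_gap_def)
qed

lemma cmi_gap_image_diff_null:
  assumes "C \<subseteq> U" "J \<subseteq> U" "\<forall>Q\<in>#M. Q \<subseteq> U" "hcond h J C = 0"
  shows "cmi_gap h C (image_mset (\<lambda>Q. Q - J) M) = cmi_gap h C M"
  using assms by (intro cmi_gap_image_diff hcond_diff_null) auto

lemma hcond_Int_le_cmi_gap_pair: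
  assumes "C \<subseteq> U" "A \<subseteq> U" "B \<subseteq> U"
  shows "hcond h (A \<inter> B) C \<le> cmi_gap h C {#A, B#}"
  using hcond_submodular[OF assms] by (simp add: cmi_gap_def Un_commute)

text \<open>An index shared by two members of a vanishing CMI is determined by the condition:
  it lies in the intersection of the two members, whose conditional entropy is
  bounded by the CMI of that pair.\<close>
lemma hcond_shared_indices_null:
  assumes "finite U" "C \<subseteq> U" "\<forall>Q\<in>#M. Q \<subseteq> U" "cmi_gap h C M = 0"
  shows "hcond h {i. 2 \<le> size (filter_mset (\<lambda>Q. i \<in> Q) M)} C = 0"
proof (rule hcond_null_finite[OF assms(2)])
  show "{i. 2 \<le> size (filter_mset (\<lambda>Q. i \<in> Q) M)} \<subseteq> U"
    using shared_indices_subset_Union[of M] assms(3) by auto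
  then show "finite {i. 2 \<le> size (filter_mset (\<lambda>Q. i \<in> Q) M)}"
    using assms(1) finite_subset by blast
  fix i assume "i \<in> {i. 2 \<le> size (filter_mset (\<lambda>Q. i \<in> Q) M)}"
  then obtain A B where AB: "{#A, B#} \<subseteq># M" "i \<in> A" "i \<in> B"
    by (auto elim: two_members_filter_mset)
  have "A \<in># M" "B \<in># M"
    using mset_subset_eqD[OF AB(1)] by auto
  then have "A \<subseteq> U" "B \<subseteq> U"
    using assms(3) by auto
  then have "hcond h {i} C \<le> cmi_gap h C M"
    using hcond_mono[of C "A \<inter> B" "{i}"] hcond_Int_le_cmi_gap_pair[of C A B]
      cmi_gap_subset_mset[of C M "{#A, B#}"] AB assms
    by fastforce
  then show "hcond h {i} C = 0"
    using hcond_nonneg[of C "{i}"] \<open>A \<subseteq> U\<close> AB assms by auto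
qed

lemma hcond_cond_cong_null:
  assumes "C \<subseteq> C'" "C' \<subseteq> C \<union> J" "C \<union> J \<subseteq> U" "X \<subseteq> U" "hcond h J C = 0"
  shows "hcond h X C' = hcond h X C"
proof -
  have eq: "h (Y \<union> J \<union> C) = h (Y \<union> C)" if "Y \<subseteq> U" for Y
    using hcond_union_null[of C Y J] that assms by (auto simp: hcond_def Un_ac)
  have "h (X \<union> C) \<le> h (X \<union> C')" "h (X \<union> C') \<le> h (X \<union> J \<union> C)"
    using assms by (auto intro!: mono)
  moreover have "h C \<le> h C'" "h C' \<le> h (J \<union> C)"
    using assms by (auto intro!: mono)
  ultimately show ?thesis
    using eq[of X] eq[of "{}"] assms by (simp add: hcond_def)
qed

end

section \<open>Purification, repeated indices and R\<close>

lemma rep_idx_eq: "rep_idx M = {i. 2 \<le> size (filter_mset (\<lambda>Q. i \<in> Q) M)}"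
  by (auto simp: rep_idx_def) (meson order_trans size_filter_mset_lesseq)

lemma snd_pur: "snd (pur K) = filter_mset (\<lambda>Q. Q \<noteq> {}) (image_mset (\<lambda>Q. Q - fst K) (snd K))"
  by (simp add: pur_def filter_mset_image_mset)

lemma filter_nonempty_image_diff_twice:
  "filter_mset (\<lambda>Q. Q \<noteq> {}) (image_mset (\<lambda>Q. Q - B)
      (filter_mset (\<lambda>Q. Q \<noteq> {}) (image_mset (\<lambda>Q. Q - A) M)))
    = filter_mset (\<lambda>Q. Q \<noteq> {}) (image_mset (\<lambda>Q. Q - (A \<union> B)) M)"
  by (induction M) (auto simp: Diff_Un Int_commute Diff_eq)

lemma cmi_gap_pur: "cmi_gap h (fst K) (snd (pur K)) = cmi_gap h (fst K) (snd K)"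
  unfolding snd_pur cmi_gap_filter_nonempty
  by (rule cmi_gap_image_diff) (simp_all add: hcond_diff_cond)

lemma mem_snd_pur: "Q \<in># snd (pur K) \<Longrightarrow> Q \<noteq> {} \<and> Q \<inter> fst K = {} \<and> (\<exists>Q0. Q0 \<in># snd K \<and> Q \<subseteq> Q0)"
  by (auto simp: pur_def)

lemma II_eq: "II K = {i. 2 \<le> size (filter_mset (\<lambda>Q. i \<in> Q) (snd (pur K)))}"
  by (simp add: II_def rep_idx_eq)

lemma II_subset_Union: "II K \<subseteq> \<Union>(set_mset (snd (pur K)))"
  unfolding II_eq by (rule shared_indices_subset_Union)

lemma II_Int_cond: "II K \<inter> fst K = {}"
  using II_subset_Union[of K] mem_snd_pur[of _ K] by blast

lemma snd_pur_subset: "\<forall>Q\<in>#snd K. Q \<subseteq> U \<Longrightarrow> \<forall>Q\<in>#snd (pur K). Q \<subseteq> U"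
  using mem_snd_pur[of _ K] by blast

lemma II_subset: "\<forall>Q\<in>#snd K. Q \<subseteq> U \<Longrightarrow> II K \<subseteq> U"
  using II_subset_Union[of K] mem_snd_pur[of _ K] by blast

definition Ts :: "cmi \<Rightarrow> cmi \<Rightarrow> nat set multiset" where
  "Ts K K' = filter_mset (\<lambda>T. T \<noteq> {}) (image_mset (\<lambda>P. P - II K) (Ps K'))"

lemma R_eq:
  "R K K' =
    (if II K' - II K = {} \<and> size (Ts K K') \<le> 1 then deg_cmi
     else if II K' - II K = {} then (fst K' - II K, Ts K K')
     else if size (Ts K K') \<le> 1 then (fst K' - II K, {#II K' - II K, II K' - II K#})
     else (fst K' - II K, {#II K' - II K, II K' - II K#} + Ts K K'))"
  unfolding R_def Ts_def Let_def ..

lemma fst_R_subset: "fst (R K K') \<subseteq> fst K'"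
  by (auto simp: R_eq deg_cmi_def)

lemma mem_Ts: "T \<in># Ts K K' \<Longrightarrow> T \<noteq> {} \<and> T \<inter> fst K' = {} \<and> (\<exists>Q. Q \<in># snd K' \<and> T \<subseteq> Q)"
  unfolding Ts_def Ps_def using mem_snd_pur[of _ K'] by fastforce

lemma Ts_eq:
  "Ts K K' = filter_mset (\<lambda>Q. Q \<noteq> {}) (image_mset (\<lambda>Q. Q - (fst K' \<union> II K' \<union> II K)) (snd K'))"
  unfolding Ts_def Ps_def snd_pur filter_nonempty_image_diff_twice ..

lemma cmi_gap_R_eq_0_iff:
  assumes "monotone_submodular h U" "fst K' \<subseteq> U" "\<forall>Q\<in>#snd K'. Q \<subseteq> U"
  shows "cmi_gap h (fst (R K K')) (snd (R K K')) = 0 \<longleftrightarrow>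
    hcond h (II K' - II K) (fst K' - II K) = 0 \<and> cmi_gap h (fst K' - II K) (Ts K K') = 0"
proof -
  interpret monotone_submodular h U
    by fact
  define D where "D = II K' - II K"
  have C: "fst K' - II K \<subseteq> U" and D: "D \<subseteq> U"
    using assms II_subset[OF assms(3)] by (auto simp: D_def)
  have Ts: "\<forall>Q\<in>#Ts K K'. Q \<subseteq> U"
    using mem_Ts[of _ K K'] assms(3) by blast
  show ?thesis
    unfolding R_eq D_def[symmetric]
    using cmi_gap_doubled[OF C D Ts] cmi_gap_doubled[OF C D, of "{#}"]
    by (cases "D = {}") (auto simp: deg_cmi_def cmi_gap_size_le_1)
qed

lemma hcond_II_null:
  assumes "monotone_submodular h U" "finite U" "fst K \<subseteq> U" "\<forall>Q\<in>#snd K. Q \<subseteq> U"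
    and "cmi_gap h (fst K) (snd K) = 0"
  shows "hcond h (II K) (fst K) = 0"
proof -
  interpret monotone_submodular h U
    by fact
  have "cmi_gap h (fst K) (snd (pur K)) = 0"
    using assms(5) by (simp only: cmi_gap_pur)
  then show ?thesis
    unfolding II_eq by (rule hcond_shared_indices_null[OF assms(2,3) snd_pur_subset[OF assms(4)]])
qed

lemma cmi_gap_eq_cmi_gap_Ts:
  assumes "monotone_submodular h U" "fst K' \<subseteq> U" "\<forall>Q\<in>#snd K'. Q \<subseteq> U" "II K \<subseteq> U"
    and null_I: "hcond h (II K) (fst K' - II K) = 0"
    and null_D: "hcond h (II K' - II K) (fst K' - II K) = 0"
  shows "cmi_gap h (fst K') (snd K') = cmi_gap h (fst K' - II K) (Ts K K')"
proof -
  interpret monotone_submodular h U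
    by fact
  define C'' where "C'' = fst K' - II K"
  define D where "D = II K' - II K"
  define J where "J = fst K' \<union> II K' \<union> II K"
  have C'': "C'' \<subseteq> U" and D: "D \<subseteq> U" and J: "J \<subseteq> U"
    using assms(2-4) II_subset[OF assms(3)] by (auto simp: C''_def D_def J_def)
  have Ts: "\<forall>Q\<in>#Ts K K'. Q \<subseteq> U"
    using mem_Ts[of _ K K'] assms(3) by blast
  have shift: "hcond h X (fst K') = hcond h X C''" if "X \<subseteq> U" for X
    using hcond_cond_cong_null[of C'' "fst K'" "II K" X] null_I that assms(4) C''
    by (auto simp: C''_def)
  have "hcond h (D \<union> II K) (fst K') = 0"
    using hcond_null_union[of "fst K'" D "II K"] shift[OF D] shift[OF assms(4)] null_I null_D
      D assms(2,4)
    by (simp add: C''_def D_def)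
  moreover have "J \<union> fst K' = (D \<union> II K) \<union> fst K'"
    by (auto simp: J_def D_def)
  ultimately have null_J: "hcond h J (fst K') = 0"
    by (simp add: hcond_def)
  have "cmi_gap h (fst K') (snd K') = cmi_gap h (fst K') (image_mset (\<lambda>Q. Q - J) (snd K'))"
    using cmi_gap_image_diff_null[OF assms(2) J assms(3) null_J] by simp
  also have "\<dots> = cmi_gap h (fst K') (Ts K K')"
    unfolding Ts_eq cmi_gap_filter_nonempty J_def ..
  also have "\<dots> = cmi_gap h C'' (Ts K K')"
    using shift Ts by (rule cmi_gap_cong_cond)
  finally show ?thesis
    by (simp add: C''_def)
qed

lemma cmi_gap_eq_0_iff_R:
  assumes "monotone_submodular h U" "finite U"
    and K: "fst K \<subseteq> U" "\<forall>Q\<in>#snd K. Q \<subseteq> U" and K': "fst K' \<subseteq> U" "\<forall>Q\<in>#snd K'. Q \<subseteq> U"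
    and sub: "fst K \<subseteq> fst K'" and gap_K: "cmi_gap h (fst K) (snd K) = 0"
  shows "cmi_gap h (fst K') (snd K') = 0 \<longleftrightarrow> cmi_gap h (fst (R K K')) (snd (R K K')) = 0"
proof -
  interpret monotone_submodular h U
    by fact
  define C'' where "C'' = fst K' - II K"
  define D where "D = II K' - II K"
  have I: "II K \<subseteq> U" and I': "II K' \<subseteq> U"
    using II_subset K'(2) K(2) by auto
  have C'': "C'' \<subseteq> U"
    using K' by (auto simp: C''_def)
  have "fst K \<subseteq> C''"
    using sub II_Int_cond[of K] by (auto simp: C''_def)
  then have "hcond h (II K) C'' \<le> hcond h (II K) (fst K)"
    using C'' I by (rule hcond_conditioning_reduces)
  then have null_I: "hcond h (II K) C'' = 0"
    using hcond_II_null[OF assms(1,2) K gap_K] hcond_nonneg[OF C'' I] by linarith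
  have R_iff: "cmi_gap h (fst (R K K')) (snd (R K K')) = 0 \<longleftrightarrow>
      hcond h D C'' = 0 \<and> cmi_gap h C'' (Ts K K') = 0"
    unfolding C''_def D_def by (rule cmi_gap_R_eq_0_iff[OF assms(1) K'])
  show ?thesis
  proof
    assume gap_K': "cmi_gap h (fst K') (snd K') = 0"
    have "hcond h D (fst K') = 0"
      using hcond_null_subset[of "fst K'" "II K'" D] hcond_II_null[OF assms(1,2) K' gap_K'] I' K'
      by (auto simp: D_def)
    moreover have "hcond h D (fst K') = hcond h D C''"
      using hcond_cond_cong_null[of C'' "fst K'" "II K" D] null_I I I' C''
      by (auto simp: C''_def D_def)
    ultimately have "hcond h D C'' = 0"
      by simp
    then show "cmi_gap h (fst (R K K')) (snd (R K K')) = 0"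
      using cmi_gap_eq_cmi_gap_Ts[OF assms(1) K' I] null_I R_iff gap_K'
      by (simp add: C''_def D_def)
  next
    assume "cmi_gap h (fst (R K K')) (snd (R K K')) = 0"
    then show "cmi_gap h (fst K') (snd K') = 0"
      using cmi_gap_eq_cmi_gap_Ts[OF assms(1) K' I] null_I R_iff by (simp add: C''_def D_def)
  qed
qed

section \<open>Implication between CMIs\<close>

lemma valid_iff_valid_R:
  assumes "admissible n p" "wf_cmi n K" "wf_cmi n K'" "fst K \<subseteq> fst K'" "valid p K"
  shows "valid p K' \<longleftrightarrow> valid p (R K K')"
  using assms cmi_gap_eq_0_iff_R[OF monotone_submodular_H[OF assms(1)], of K K']
  by (simp add: valid_iff_cmi_gap wf_cmi_def)

lemma valid_deg_cmi: "valid p deg_cmi"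
  by (simp add: valid_iff_cmi_gap deg_cmi_def)

definition shared_bit :: "nat set \<Rightarrow> dist" where
  "shared_bit S = pmf_of_set {\<lambda>_. 0, \<lambda>i. of_bool (i \<in> S)}"

lemma H_shared_bit: "H (shared_bit S) A = (if A \<inter> S = {} then 0 else 1)"
proof -
  let ?X = "{\<lambda>_. 0, \<lambda>i. of_bool (i \<in> S)} :: (nat \<Rightarrow> nat) set"
  let ?z = "restrict0 A (\<lambda>_. 0)" and ?b = "restrict0 A (\<lambda>i. of_bool (i \<in> S))"
  have marg: "marg (shared_bit S) A = map_pmf (restrict0 A) (pmf_of_set ?X)"
    by (simp add: shared_bit_def marg_eq_map_restrict0)
  show ?thesis
  proof (cases "A \<inter> S = {}")
    case True
    then have b_eq_z: "?b = ?z"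
      by (auto simp: restrict0_def fun_eq_iff)
    have "marg (shared_bit S) A = map_pmf (\<lambda>_. ?z) (pmf_of_set ?X)"
      unfolding marg by (rule map_pmf_cong) (use b_eq_z in auto)
    then have "marg (shared_bit S) A = return_pmf ?z"
      by (simp add: map_pmf_const)
    with True show ?thesis
      by (simp add: H_def ent_return_pmf)
  next
    case False
    then have z_ne_b: "?z \<noteq> ?b"
      by (auto simp: restrict0_def fun_eq_iff)
    then have "marg (shared_bit S) A = pmf_of_set {?z, ?b}"
      unfolding marg by (subst map_pmf_of_set_inj) (auto simp: inj_on_def)
    with False z_ne_b show ?thesis
      by (simp add: H_def ent_pmf_of_set_doubleton)
  qed
qed

lemma admissible_shared_bit: "admissible n (shared_bit S)"
  by (auto simp: admissible_def shared_bit_def marg_eq_map_restrict0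
      intro!: finite_ent_finite_support)

lemma not_implies_if_not_subset:
  assumes "\<not> fst K \<subseteq> fst K'" and two: "2 \<le> size (snd (pur K'))"
  shows "\<not> implies n K K'"
proof
  assume imp: "implies n K K'"
  define p where "p = shared_bit (- fst K')"
  have H: "H p A = (if A \<subseteq> fst K' then 0 else 1)" for A
    by (auto simp: p_def H_shared_bit)
  have "valid p K"
    using assms(1) by (auto simp: valid_iff_cmi_gap cmi_gap_def hcond_def H)
  then have "valid p K'"
    using imp admissible_shared_bit by (auto simp: implies_def p_def)
  then have gap: "cmi_gap (H p) (fst K') (snd (pur K')) = 0"
    by (simp add: valid_iff_cmi_gap cmi_gap_pur)
  have "hcond (H p) Q (fst K') = 1" if "Q \<in># snd (pur K')" for Q
    using mem_snd_pur[OF that] by (auto simp: hcond_def H)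
  then have "(\<Sum>Q\<in>#snd (pur K'). hcond (H p) Q (fst K')) = real (size (snd (pur K')))"
    by (simp cong: image_mset_cong)
  moreover have "hcond (H p) (\<Union>(set_mset (snd (pur K')))) (fst K') \<le> 1"
    by (simp add: hcond_def H)
  ultimately show False
    using gap two by (simp add: cmi_gap_def)
qed

lemma size_snd_pur_if_nondegenerate:
  assumes "\<not> degenerate n K"
  shows "2 \<le> size (snd (pur K))"
proof (rule ccontr)
  assume "\<not> 2 \<le> size (snd (pur K))"
  then have "cmi_gap (H p) (fst K) (snd (pur K)) = 0" for p
    by (simp add: cmi_gap_size_le_1)
  then have "valid p K" for p
    by (simp add: valid_iff_cmi_gap cmi_gap_pur)
  with assms show False
    by (simp add: degenerate_def)
qed

lemma size_snd_pur_R: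
  assumes "R K K' \<noteq> deg_cmi"
  shows "2 \<le> size (snd (pur (R K K')))"
proof -
  have "Q - fst (R K K') \<noteq> {}" if "Q \<in># snd (R K K')" for Q
    using that assms II_Int_cond[of K'] mem_Ts[of Q K K']
    by (auto simp: R_eq split: if_splits)
  then have "filter_mset (\<lambda>Q. Q - fst (R K K') \<noteq> {}) (snd (R K K'))
      = filter_mset (\<lambda>_. True) (snd (R K K'))"
    by (intro filter_mset_cong) auto
  then have "size (snd (pur (R K K'))) = size (snd (R K K'))"
    by (simp add: pur_def)
  moreover have "2 \<le> size (snd (R K K'))"
    using assms unfolding R_eq by (auto split: if_splits)
  ultimately show ?thesis
    by simp
qed

lemma implies_iff_subset_and_implies_R:
  assumes "wf_cmi n K" "wf_cmi n K'" "\<not> degenerate n K'"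
  shows "implies n K K' \<longleftrightarrow> fst K \<subseteq> fst K' \<and> implies n K (R K K')"
  using not_implies_if_not_subset[OF _ size_snd_pur_if_nondegenerate[OF assms(3)]]
    valid_iff_valid_R[OF _ assms(1,2)]
  unfolding implies_def by blast

theorem mainTheorem17:
  fixes n :: nat and K K' :: cmi
  assumes "wf_cmi n K" and "wf_cmi n K'"
    and "\<not> degenerate n K" and "\<not> degenerate n K'"
  shows "(R K K' = deg_cmi \<longrightarrow> (implies n K K' \<longleftrightarrow> fst K \<subseteq> fst K'))
       \<and> (R K K' \<noteq> deg_cmi \<longrightarrow> (implies n K K' \<longleftrightarrow> implies n K (R K K')))"
proof -
  have "implies n K deg_cmi"
    by (simp add: implies_def valid_deg_cmi)
  moreover have "fst K \<subseteq> fst K'" if "R K K' \<noteq> deg_cmi" "implies n K (R K K')"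
    using not_implies_if_not_subset[OF _ size_snd_pur_R] fst_R_subset that by blast
  ultimately show ?thesis
    using implies_iff_subset_and_implies_R[OF assms(1,2,4)] by auto
qed

end
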